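(* Let $S$ be an instance of Max Lin-2 AA with $m$ equations in which no two equations have the same left-hand side, and let $\rho$ be the maximum over variables $z_i$ of the number of equations of $S$ containing $z_i$. Run the variant of Algorithm $\mathcal{A}$ in which, in step (2), an arbitrary variable still occurring in $S$ is chosen and marked. Then after the first $k-1$ iterations at most $2\rho(k-1)$ equations have been deleted from $S$ in total (by marking or by the combining rule). Consequently, if $2\rho(k-1)<m$, the algorithm marks $k$ equations.
   Context: Max Lin-2 AA: an instance is a system $S$ of $m$ linear equations over $\mathbb{F}_2$ in variables $z_1,\dots,z_n$, Equation $j$ being $\sum_{i\in\alpha_j} z_i=b_j$ with $\emptyset\neq\alpha_j\subseteq\{1,\dots,n\}$, $b_j\in\mathbb{F}_2$, positive integer weight $w_j$, and a nonnegative integer parameter $k$. Combining rule: if two equations $\sum_{i\in\alpha}z_i=b'$ (weight $w'$) and $\sum_{i\in\alpha}z_i=b''$ (weight $w''$) have the same left-hand side, replace them by one equation with that left-hand side: if $b'=b''$, with right-hand side $b'$ and weight $w'+w''$; otherwise, the one of larger weight, with new weight $|w'-w''|$; an equation of resulting weight $0$ is deleted. Algorithm $\mathcal{A}$: initially nothing is marked. While $S\neq\emptyset$ and fewer than $k$ equations are marked: (1) for each $i$ compute $\rho_i$, the number of equations currently in $S$ containing $z_i$; (2) choose a variable $z_l$ still occurring in $S$ with minimum $\rho_l$ and mark it; (3) choose an arbitrary equation $\sum_{i\in\alpha}z_i=b$ of $S$ containing $z_l$; (4) mark this equation and delete it from $S$; (5) replace every other equation $\sum_{i\in\alpha'}z_i=b'$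 of $S$ containing $z_l$ by $\sum_{i\in\alpha\triangle\alpha'}z_i=b+b'$ (keeping its weight), where $\triangle$ is symmetric difference; (6) apply the combining rule exhaustively (deleting equations of weight $0$). *)

theory Defs
  imports Main "HOL-Library.Multiset"
begin

text \<open>An equation  sum_{i in alpha} z_i = b  with weight w is the triple (alpha, b, w).
  Right-hand sides live in F_2, represented by bool (False = 0, True = 1; addition = xor).\<close>

type_synonym equation = "nat set \<times> bool \<times> nat"

definition lhs :: "equation \<Rightarrow> nat set" where "lhs e = fst e"
definition rhs :: "equation \<Rightarrow> bool" where "rhs e = fst (snd e)"
definition wt  :: "equation \<Rightarrow> nat"  where "wt e = snd (snd e)"

definition is_instance :: "equation multiset \<Rightarrow> bool" where
  "is_instance S \<longleftrightarrow> (\<forall>e \<in># S. finite (lhs e) \<and> lhs e \<noteq> {} \<and> wt e > 0)"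

definition distinct_lhs :: "equation multiset \<Rightarrow> bool" where
  "distinct_lhs S \<longleftrightarrow> (\<forall>\<alpha>. count (image_mset lhs S) \<alpha> \<le> 1)"

definition rho :: "equation multiset \<Rightarrow> nat" where
  "rho S = Max (range (\<lambda>i. size (filter_mset (\<lambda>e. i \<in> lhs e) S)))"

definition combine_pair :: "equation \<Rightarrow> equation \<Rightarrow> equation" where
  "combine_pair e1 e2 =
     (if rhs e1 = rhs e2 then (lhs e1, rhs e1, wt e1 + wt e2)
      else if wt e1 \<ge> wt e2 then (lhs e1, rhs e1, wt e1 - wt e2)
      else (lhs e1, rhs e2, wt e2 - wt e1))"

definition combine_step :: "equation multiset \<Rightarrow> equation multiset \<Rightarrow> bool" where
  "combine_step M M' \<longleftrightarrow> (\<exists>e1 e2. {#e1, e2#} \<subseteq># M \<and> lhs e1 = lhs e2 \<and>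
      M' = M - {#e1, e2#} +
           (if wt (combine_pair e1 e2) = 0 then {#} else {#combine_pair e1 e2#}))"

definition combine_exh :: "equation multiset \<Rightarrow> equation multiset \<Rightarrow> bool" where
  "combine_exh M M' \<longleftrightarrow> combine_step\<^sup>*\<^sup>* M M' \<and> (\<nexists>M''. combine_step M' M'')"

definition symdiff :: "nat set \<Rightarrow> nat set \<Rightarrow> nat set" where
  "symdiff A B = (A - B) \<union> (B - A)"

definition alg_step :: "equation multiset \<Rightarrow> equation multiset \<Rightarrow> bool" where
  "alg_step S S' \<longleftrightarrow> (\<exists>l e0. e0 \<in># S \<and> l \<in> lhs e0 \<and>
      combine_exh
        (image_mset (\<lambda>e. if l \<in> lhs e then (symdiff (lhs e0) (lhs e), rhs e0 \<noteq> rhs e, wt e) else e)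
           (S - {#e0#}))
        S')"

end

theory Submission
  imports Defs
begin

(* Let A0 be the set of left-hand sides of the original system S; since they are
   distinct, m = card A0.  For every alpha in A0 we follow its "reduced form" red alpha: the
   left-hand side the equation alpha would have if it were never deleted.  Eliminating the marked
   variable l with an equation of left-hand side L replaces every reduced form containing l by
   its symmetric difference with L (the map pivot).  Two invariants are kept along the run:
   (1) tracks: the equations of the current system T have distinct, nonempty left-hand sides,
       each a reduced form, and every nonempty reduced form shared with no other alpha occurs;
   (2) reduction_in_span: reduced forms avoid the set P of marked variables, and each
       alpha (+) red alpha lies in a symmetric-difference-closed family W whose nonempty members
       all meet P (W is the span of the marked equations, triangular with respect to P).
   By (2), two original equations that both avoid P never acquire the same reduced form, and an
   equation avoiding P never reduces to the empty set.  Hence every lost equation avoiding P can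
   be charged injectively to an original equation meeting P, giving
   card A0 <= size T + 2 * #{alpha in A0. alpha meets P} <= size T + 2 * rho * card P,
   with card P at most the number of iterations.  Finally an equation of a nonempty system always
   has a variable to eliminate, and exhaustive combining always terminates, so the algorithm can
   continue as long as the bound leaves an equation. *)

lemma card_set_mset_le: "card (set_mset M) \<le> size M"
  by (induction M) (auto simp: card_insert_if)

lemma size_eq_card_set_mset:
  assumes "\<And>x. count M x \<le> 1"
  shows "size M = card (set_mset M)"
  using assms
proof (induction M)
  case (add x M)
  have "count M y \<le> 1" for y using add.prems[of y] by (simp split: if_splits)
  moreover have "x \<notin># M" using add.prems[of x] by (simp add: count_eq_zero_iff[symmetric])
  ultimately show ?case using add.IH by simp
qed simp

lemma two_in_image_iff:
  "(\<exists>x y. {#x, y#} \<subseteq># M \<and> f x = a \<and> f y = a) \<longleftrightarrow> 2 \<le> count (image_mset f M) a"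
proof
  assume "\<exists>x y. {#x, y#} \<subseteq># M \<and> f x = a \<and> f y = a"
  then obtain x y where xy: "{#x, y#} \<subseteq># M" "f x = a" "f y = a" by blast
  have "image_mset f {#x, y#} \<subseteq># image_mset f M" using xy(1) by (rule image_mset_subseteq_mono)
  then have "{#a, a#} \<subseteq># image_mset f M" using xy(2,3) by simp
  then have "count {#a, a#} a \<le> count (image_mset f M) a" by (rule mset_subset_eq_count)
  moreover have "count {#a, a#} a = 2" by simp
  ultimately show "2 \<le> count (image_mset f M) a" by linarith
next
  assume two: "2 \<le> count (image_mset f M) a"
  then have "a \<in># image_mset f M" by (intro count_inI) simp
  then obtain x where x: "x \<in># M" "f x = a" by auto
  have "image_mset f (M - {#x#}) = image_mset f M - {#a#}"
    using image_mset_Diff[of "{#x#}" M f] x by simp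
  then have "a \<in># image_mset f (M - {#x#})" using two by (simp add: in_diff_count)
  then obtain y where y: "y \<in># M - {#x#}" "f y = a" by auto
  have "{#x, y#} \<subseteq># M" using x(1) y(1) by (simp add: insert_subset_eq_iff)
  then show "\<exists>x y. {#x, y#} \<subseteq># M \<and> f x = a \<and> f y = a" using x(2) y(2) by blast
qed

lemma count_image_mset_cong:
  assumes "\<And>x. x \<in># M \<Longrightarrow> f x = a \<longleftrightarrow> g x = b"
  shows "count (image_mset f M) a = count (image_mset g M) b"
  using assms by (induction M) auto

lemma distinct_lhs_iff_no_pair:
  "distinct_lhs M \<longleftrightarrow> (\<nexists>e1 e2. {#e1, e2#} \<subseteq># M \<and> lhs e1 = lhs e2)"
proof -
  have "count (image_mset lhs M) a \<le> 1 \<longleftrightarrow>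
      \<not> (\<exists>x y. {#x, y#} \<subseteq># M \<and> lhs x = a \<and> lhs y = a)" for a
    unfolding two_in_image_iff by linarith
  then show ?thesis unfolding distinct_lhs_def by blast
qed

definition combine_result :: "equation \<Rightarrow> equation \<Rightarrow> equation multiset" where
  "combine_result e1 e2 =
     (if wt (combine_pair e1 e2) = 0 then {#} else {#combine_pair e1 e2#})"

lemma lhs_combine_result: "e \<in># combine_result e1 e2 \<Longrightarrow> lhs e = lhs e1"
  by (simp add: combine_result_def combine_pair_def lhs_def split: if_splits)

lemma size_combine_result: "size (combine_result e1 e2) \<le> 1"
  by (simp add: combine_result_def)

lemma combine_stepE:
  assumes "combine_step M M'"
  obtains e1 e2 where "{#e1, e2#} \<subseteq># M" "lhs e1 = lhs e2"
    "M' = M - {#e1, e2#} + combine_result e1 e2"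
  using assms unfolding combine_step_def combine_result_def by blast

lemma combine_stepI:
  "{#e1, e2#} \<subseteq># M \<Longrightarrow> lhs e1 = lhs e2 \<Longrightarrow>
    combine_step M (M - {#e1, e2#} + combine_result e1 e2)"
  unfolding combine_step_def combine_result_def by blast

lemma combine_step_lhs:
  assumes "combine_step M M'"
  shows "lhs ` set_mset M' \<subseteq> lhs ` set_mset M"
proof
  fix a assume "a \<in> lhs ` set_mset M'"
  then obtain x where x: "x \<in># M'" "a = lhs x" by auto
  obtain e1 e2 where pair: "{#e1, e2#} \<subseteq># M"
    and M': "M' = M - {#e1, e2#} + combine_result e1 e2"
    using assms by (rule combine_stepE)
  have "e1 \<in># M" using pair by (simp add: insert_subset_eq_iff)
  show "a \<in> lhs ` set_mset M"
  proof (cases "x \<in># M - {#e1, e2#}")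
    case True
    then show ?thesis using x(2) by (auto dest: in_diffD)
  next
    case False
    then have "lhs x = lhs e1" using x(1) M' by (auto dest: lhs_combine_result)
    then show ?thesis using x(2) \<open>e1 \<in># M\<close> by auto
  qed
qed

lemma combine_steps_lhs:
  "combine_step\<^sup>*\<^sup>* M M' \<Longrightarrow> lhs ` set_mset M' \<subseteq> lhs ` set_mset M"
proof (induction rule: rtranclp_induct)
  case (step M'' M')
  show ?case using combine_step_lhs[OF step(2)] step.IH by (rule subset_trans)
qed simp

lemma combine_step_keeps_unique:
  assumes "combine_step M M'" "e \<in># M" "count (image_mset lhs M) (lhs e) \<le> 1"
  shows "e \<in># M' \<and> count (image_mset lhs M') (lhs e) \<le> 1"
proof -
  obtain e1 e2 where pair: "{#e1, e2#} \<subseteq># M" "lhs e1 = lhs e2"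
    and M': "M' = M - {#e1, e2#} + combine_result e1 e2"
    using assms(1) by (rule combine_stepE)
  have other_lhs: "lhs e1 \<noteq> lhs e"
  proof
    assume "lhs e1 = lhs e"
    then have "\<exists>x y. {#x, y#} \<subseteq># M \<and> lhs x = lhs e \<and> lhs y = lhs e"
      using pair by (intro exI[of _ e1] exI[of _ e2]) simp
    then have "2 \<le> count (image_mset lhs M) (lhs e)" by (simp only: two_in_image_iff)
    then show False using assms(3) by linarith
  qed
  then have "e \<in># M - {#e1, e2#}" using assms(2) pair(2) by (auto simp: in_diff_count)
  have not_new: "count (image_mset lhs (combine_result e1 e2)) (lhs e) = 0"
    using other_lhs by (auto simp flip: not_in_iff dest: lhs_combine_result)
  have "image_mset lhs (M - {#e1, e2#}) \<subseteq># image_mset lhs M"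
    by (rule image_mset_subseteq_mono) simp
  then have "count (image_mset lhs (M - {#e1, e2#})) (lhs e) \<le> count (image_mset lhs M) (lhs e)"
    by (rule mset_subset_eq_count)
  then show ?thesis
    using \<open>e \<in># M - {#e1, e2#}\<close> M' not_new assms(3) by simp
qed

lemma combine_steps_keep_unique:
  assumes "combine_step\<^sup>*\<^sup>* M M'" "e \<in># M" "count (image_mset lhs M) (lhs e) \<le> 1"
  shows "e \<in># M'"
proof -
  have "e \<in># M' \<and> count (image_mset lhs M') (lhs e) \<le> 1"
    using assms by induction (auto dest: combine_step_keeps_unique)
  then show ?thesis ..
qed

lemma combine_exh_distinct: "combine_exh M M' \<Longrightarrow> distinct_lhs M'"
  unfolding combine_exh_def distinct_lhs_iff_no_pair using combine_stepI by blast

(* Exhaustive combining always terminates: every step decreases the number of equations. *)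
lemma combine_exh_exists: "\<exists>M'. combine_exh M M'"
proof (induction "size M" arbitrary: M rule: less_induct)
  case less
  show ?case
  proof (cases "\<exists>M''. combine_step M M''")
    case False
    then show ?thesis unfolding combine_exh_def by blast
  next
    case True
    then obtain M'' where step: "combine_step M M''" by blast
    then obtain e1 e2 where pair: "{#e1, e2#} \<subseteq># M"
      and M'': "M'' = M - {#e1, e2#} + combine_result e1 e2"
      by (rule combine_stepE)
    have "size {#e1, e2#} \<le> size M" using pair by (rule size_mset_mono)
    moreover have "size (M - {#e1, e2#}) = size M - 2"
      using pair by (simp add: size_Diff_submset)
    ultimately have "size M'' < size M"
      unfolding M'' using size_combine_result[of e1 e2] by simp
    then obtain M3 where "combine_exh M'' M3" using less by blast
    then show ?thesis
      using step unfolding combine_exh_def by (blast intro: converse_rtranclp_into_rtranclp)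
  qed
qed

lemma symdiff_empty_iff: "symdiff A B = {} \<longleftrightarrow> A = B"
  by (auto simp: symdiff_def)

definition eliminate :: "nat \<Rightarrow> equation \<Rightarrow> equation \<Rightarrow> equation" where
  "eliminate l e0 e =
     (if l \<in> lhs e then (symdiff (lhs e0) (lhs e), rhs e0 \<noteq> rhs e, wt e) else e)"

lemma alg_step_iff:
  "alg_step T T' \<longleftrightarrow> (\<exists>l e0. e0 \<in># T \<and> l \<in> lhs e0 \<and>
      combine_exh (image_mset (eliminate l e0) (T - {#e0#})) T')"
  unfolding alg_step_def eliminate_def[abs_def] ..

(* The effect of this elimination on reduced forms, where L is the marked left-hand side. *)
definition pivot :: "nat \<Rightarrow> nat set \<Rightarrow> (nat set \<Rightarrow> nat set) \<Rightarrow> nat set \<Rightarrow> nat set" where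
  "pivot l L red \<alpha> = (if l \<in> red \<alpha> then symdiff L (red \<alpha>) else red \<alpha>)"

lemma lhs_eliminate:
  "lhs e = red \<beta> \<Longrightarrow> lhs (eliminate l e0 e) = pivot l (lhs e0) red \<beta>"
  by (simp add: eliminate_def pivot_def lhs_def)

(* Families of sets closed under symmetric difference (subspaces of F_2^n, as sets). *)
definition symdiff_closed :: "nat set set \<Rightarrow> bool" where
  "symdiff_closed W \<longleftrightarrow> (\<forall>x\<in>W. \<forall>y\<in>W. symdiff x y \<in> W)"

(* Adjoining one generator L keeps a family closed: W + {0, L} = W \<union> (L + W). *)
lemma symdiff_closed_extend:
  assumes closed: "symdiff_closed W"
  shows "symdiff_closed (W \<union> symdiff L ` W)"
proof -
  have involution: "symdiff L (symdiff L x) = x" for x by (auto simp: symdiff_def)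
  have shifted: "x \<in> W \<union> symdiff L ` W \<longleftrightarrow> x \<in> W \<or> symdiff L x \<in> W" for x
  proof -
    have "x \<in> symdiff L ` W \<longleftrightarrow> symdiff L x \<in> W"
    proof
      assume "x \<in> symdiff L ` W"
      then obtain w where "w \<in> W" "x = symdiff L w" by blast
      then show "symdiff L x \<in> W" using involution by simp
    next
      assume "symdiff L x \<in> W"
      then have "symdiff L (symdiff L x) \<in> symdiff L ` W" by (rule imageI)
      then show "x \<in> symdiff L ` W" using involution by simp
    qed
    then show ?thesis by blast
  qed
  have "symdiff x y \<in> W \<union> symdiff L ` W" if "x \<in> W \<union> symdiff L ` W" "y \<in> W \<union> symdiff L ` W" for x y
  proof -
    have shift_left: "symdiff (symdiff L x) y = symdiff L (symdiff x y)"
      and shift_right: "symdiff x (symdiff L y) = symdiff L (symdiff x y)"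
      and shift_both: "symdiff (symdiff L x) (symdiff L y) = symdiff x y"
      by (auto simp: symdiff_def)
    from that consider "x \<in> W" "y \<in> W" | "x \<in> W" "symdiff L y \<in> W"
      | "symdiff L x \<in> W" "y \<in> W" | "symdiff L x \<in> W" "symdiff L y \<in> W"
      unfolding shifted by blast
    then have "symdiff x y \<in> W \<or> symdiff L (symdiff x y) \<in> W"
    proof cases
      case 1 then show ?thesis using closed unfolding symdiff_closed_def by blast
    next
      case 2 then show ?thesis using closed shift_right unfolding symdiff_closed_def by metis
    next
      case 3 then show ?thesis using closed shift_left unfolding symdiff_closed_def by metis
    next
      case 4 then show ?thesis using closed shift_both unfolding symdiff_closed_def by metis
    qed
    then show ?thesis unfolding shifted .
  qed
  then show ?thesis unfolding symdiff_closed_def by blast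
qed

(* W is "spanned by the marked equations" with respect to the marked variables P: every nonzero
   member contains some marked variable. *)
definition marked_span :: "nat set \<Rightarrow> nat set set \<Rightarrow> bool" where
  "marked_span P W \<longleftrightarrow> finite P \<and> symdiff_closed W \<and> (\<forall>w\<in>W. w \<noteq> {} \<longrightarrow> w \<inter> P \<noteq> {})"

lemma marked_span_extend:
  assumes span: "marked_span P W" and "l \<in> L" "L \<inter> P = {}"
  shows "marked_span (insert l P) (W \<union> symdiff L ` W)"
proof -
  have meets: "\<forall>w\<in>W. w \<noteq> {} \<longrightarrow> w \<inter> P \<noteq> {}" using span unfolding marked_span_def by blast
  have "w \<inter> insert l P \<noteq> {}" if w: "w \<in> W \<union> symdiff L ` W" "w \<noteq> {}" for w
  proof (cases "w \<in> W")
    case True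
    then show ?thesis using meets w(2) by blast
  next
    case False
    then obtain w0 where w0: "w0 \<in> W" "w = symdiff L w0" using w(1) by blast
    show ?thesis
    proof (cases "w0 = {}")
      case True
      then show ?thesis using w0(2) \<open>l \<in> L\<close> by (auto simp: symdiff_def)
    next
      case False
      then obtain p where "p \<in> w0" "p \<in> P" using meets w0(1) by blast
      then show ?thesis using w0(2) \<open>L \<inter> P = {}\<close> by (auto simp: symdiff_def)
    qed
  qed
  then show ?thesis using span symdiff_closed_extend unfolding marked_span_def by blast
qed

definition reduction_in_span ::
    "nat set set \<Rightarrow> (nat set \<Rightarrow> nat set) \<Rightarrow> nat set \<Rightarrow> nat set set \<Rightarrow> bool" where
  "reduction_in_span A0 red P W \<longleftrightarrow> marked_span P W \<and>
     (\<forall>\<alpha>\<in>A0. red \<alpha> \<inter> P = {} \<and> symdiff \<alpha> (red \<alpha>) \<in> W)"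

lemma reduction_in_span_pivot:
  assumes inv: "reduction_in_span A0 red P W" and "l \<in> L" "L \<inter> P = {}"
  shows "reduction_in_span A0 (pivot l L red) (insert l P) (W \<union> symdiff L ` W)"
proof -
  have "pivot l L red \<alpha> \<inter> insert l P = {} \<and>
      symdiff \<alpha> (pivot l L red \<alpha>) \<in> W \<union> symdiff L ` W" if "\<alpha> \<in> A0" for \<alpha>
  proof -
    have "red \<alpha> \<inter> P = {}" "symdiff \<alpha> (red \<alpha>) \<in> W"
      using inv that unfolding reduction_in_span_def by blast+
    moreover have "symdiff \<alpha> (symdiff L (red \<alpha>)) = symdiff L (symdiff \<alpha> (red \<alpha>))"
      by (auto simp: symdiff_def)
    ultimately show ?thesis
      using \<open>l \<in> L\<close> \<open>L \<inter> P = {}\<close> unfolding pivot_def by (auto simp: symdiff_def)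
  qed
  moreover have "marked_span (insert l P) (W \<union> symdiff L ` W)"
    using inv assms(2,3) marked_span_extend unfolding reduction_in_span_def by blast
  ultimately show ?thesis unfolding reduction_in_span_def by blast
qed

(* Two original left-hand sides with equal reduced form and equal marked part coincide; in
   particular two distinct ones avoiding P are never merged. *)
lemma reduction_in_span_separates:
  assumes inv: "reduction_in_span A0 red P W" and "\<alpha> \<in> A0" "\<beta> \<in> A0"
    and "red \<alpha> = red \<beta>" "\<alpha> \<inter> P = \<beta> \<inter> P"
  shows "\<alpha> = \<beta>"
proof -
  have "symdiff \<alpha> (red \<alpha>) \<in> W" "symdiff \<beta> (red \<beta>) \<in> W"
    and closed: "symdiff_closed W"
    and meets: "\<forall>w\<in>W. w \<noteq> {} \<longrightarrow> w \<inter> P \<noteq> {}"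
    using inv assms(2,3) unfolding reduction_in_span_def marked_span_def by blast+
  then have "symdiff (symdiff \<alpha> (red \<alpha>)) (symdiff \<beta> (red \<beta>)) \<in> W"
    unfolding symdiff_closed_def by blast
  moreover have "symdiff (symdiff \<alpha> (red \<alpha>)) (symdiff \<beta> (red \<beta>)) = symdiff \<alpha> \<beta>"
    using \<open>red \<alpha> = red \<beta>\<close> by (auto simp: symdiff_def)
  moreover have "symdiff \<alpha> \<beta> \<inter> P = {}" using \<open>\<alpha> \<inter> P = \<beta> \<inter> P\<close> by (auto simp: symdiff_def)
  ultimately have "symdiff \<alpha> \<beta> = {}" using meets by auto
  then show ?thesis by (auto simp: symdiff_def)
qed

lemma reduction_in_span_nonempty:
  assumes inv: "reduction_in_span A0 red P W" and "\<alpha> \<in> A0" "\<alpha> \<noteq> {}" "\<alpha> \<inter> P = {}"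
  shows "red \<alpha> \<noteq> {}"
proof
  assume "red \<alpha> = {}"
  then have "symdiff \<alpha> (red \<alpha>) = \<alpha>" by (simp add: symdiff_def)
  then have "\<alpha> \<in> W" using inv \<open>\<alpha> \<in> A0\<close> unfolding reduction_in_span_def by metis
  then show False using inv assms(3,4) unfolding reduction_in_span_def marked_span_def by blast
qed

definition survives :: "nat set set \<Rightarrow> (nat set \<Rightarrow> nat set) \<Rightarrow> nat set \<Rightarrow> bool" where
  "survives A0 red \<alpha> \<longleftrightarrow> red \<alpha> \<noteq> {} \<and> (\<forall>\<beta>\<in>A0. red \<beta> = red \<alpha> \<longrightarrow> \<beta> = \<alpha>)"

definition tracks :: "nat set set \<Rightarrow> (nat set \<Rightarrow> nat set) \<Rightarrow> equation multiset \<Rightarrow> bool" where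
  "tracks A0 red T \<longleftrightarrow> distinct_lhs T \<and> (\<forall>e\<in>#T. lhs e \<noteq> {} \<and> lhs e \<in> red ` A0) \<and>
     (\<forall>\<alpha>\<in>A0. survives A0 red \<alpha> \<longrightarrow> red \<alpha> \<in> lhs ` set_mset T)"

lemma tracks_init:
  assumes "is_instance S" "distinct_lhs S"
  shows "tracks (lhs ` set_mset S) id S"
  using assms unfolding tracks_def is_instance_def by auto

lemma lhs_other_equation:
  assumes "distinct_lhs T" "e0 \<in># T" "e \<in># T - {#e0#}"
  shows "lhs e \<noteq> lhs e0"
proof -
  have "{#e0, e#} \<subseteq># T" using assms(2,3) by (simp add: insert_subset_eq_iff)
  then show ?thesis using assms(1) unfolding distinct_lhs_iff_no_pair by blast
qed

lemma tracks_eliminate_lhs: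
  assumes inv: "tracks A0 red T" and "e0 \<in># T" "e \<in># T - {#e0#}"
  shows "lhs (eliminate l e0 e) \<noteq> {} \<and> lhs (eliminate l e0 e) \<in> pivot l (lhs e0) red ` A0"
proof -
  have "e \<in># T" using assms(3) by (rule in_diffD)
  then obtain \<beta> where "\<beta> \<in> A0" "lhs e = red \<beta>" and "lhs e \<noteq> {}"
    using inv unfolding tracks_def by blast
  moreover have "lhs e \<noteq> lhs e0"
    using inv assms(2,3) lhs_other_equation unfolding tracks_def by blast
  moreover have "lhs (eliminate l e0 e) = (if l \<in> lhs e then symdiff (lhs e0) (lhs e) else lhs e)"
    by (simp add: eliminate_def lhs_def)
  ultimately have "lhs (eliminate l e0 e) \<noteq> {}" by (simp add: symdiff_empty_iff)
  moreover have "lhs (eliminate l e0 e) = pivot l (lhs e0) red \<beta>"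
    using \<open>lhs e = red \<beta>\<close> by (rule lhs_eliminate)
  ultimately show ?thesis using \<open>\<beta> \<in> A0\<close> by simp
qed

(* A survivor after the pivot was a survivor before, its equation is not the marked one, and
   after elimination its left-hand side is still unique, so combining leaves it in place. *)
lemma tracks_survivor:
  assumes inv: "tracks A0 red T" and "e0 \<in># T" "l \<in> lhs e0"
    and combined: "combine_step\<^sup>*\<^sup>* (image_mset (eliminate l e0) (T - {#e0#})) T'"
    and "\<alpha> \<in> A0" and surv: "survives A0 (pivot l (lhs e0) red) \<alpha>"
  shows "pivot l (lhs e0) red \<alpha> \<in> lhs ` set_mset T'"
proof -
  let ?red' = "pivot l (lhs e0) red" and ?M = "image_mset (eliminate l e0) (T - {#e0#})"
  have same_class: "?red' \<beta> = ?red' \<alpha> \<longleftrightarrow> red \<beta> = red \<alpha>" if "\<beta> \<in> A0" for \<beta>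
    using surv that unfolding survives_def pivot_def by metis
  have "red \<alpha> \<noteq> {}" using surv unfolding survives_def pivot_def by (auto simp: symdiff_def)
  then have "survives A0 red \<alpha>" using surv same_class unfolding survives_def by blast
  then obtain e where e: "e \<in># T" "lhs e = red \<alpha>"
    using inv \<open>\<alpha> \<in> A0\<close> unfolding tracks_def by blast
  have "e \<noteq> e0"
  proof
    assume "e = e0"
    then have "?red' \<alpha> = {}" using e(2) \<open>l \<in> lhs e0\<close> by (simp add: pivot_def symdiff_def)
    then show False using surv unfolding survives_def by blast
  qed
  then have e_rest: "e \<in># T - {#e0#}" using e(1) by (simp add: in_diff_count)
  have lhs_e': "lhs (eliminate l e0 e) = ?red' \<alpha>" using e(2) by (rule lhs_eliminate)
  have same_lhs: "lhs (eliminate l e0 x) = ?red' \<alpha> \<longleftrightarrow> lhs x = red \<alpha>" if x: "x \<in># T - {#e0#}" for x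
  proof -
    obtain \<beta> where "\<beta> \<in> A0" "lhs x = red \<beta>"
      using inv in_diffD[OF x] unfolding tracks_def by blast
    then show ?thesis using same_class lhs_eliminate[of x red \<beta> l e0] by simp
  qed
  have "count (image_mset lhs ?M) (?red' \<alpha>) = count (image_mset lhs (T - {#e0#})) (red \<alpha>)"
    unfolding image_mset.compositionality by (rule count_image_mset_cong) (simp add: same_lhs)
  also have "\<dots> \<le> count (image_mset lhs T) (red \<alpha>)"
    using \<open>e0 \<in># T\<close> by (simp add: image_mset_Diff)
  also have "\<dots> \<le> 1" using inv unfolding tracks_def distinct_lhs_def by blast
  finally have "eliminate l e0 e \<in># T'"
    using combine_steps_keep_unique[OF combined] e_rest lhs_e' by simp
  then show ?thesis using lhs_e' by force
qed

lemma tracks_step: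
  assumes inv: "tracks A0 red T" and "e0 \<in># T" "l \<in> lhs e0"
    and combined: "combine_exh (image_mset (eliminate l e0) (T - {#e0#})) T'"
  shows "tracks A0 (pivot l (lhs e0) red) T'"
proof -
  let ?M = "image_mset (eliminate l e0) (T - {#e0#})"
  have steps: "combine_step\<^sup>*\<^sup>* ?M T'" using combined unfolding combine_exh_def by blast
  have "lhs e \<noteq> {} \<and> lhs e \<in> pivot l (lhs e0) red ` A0" if "e \<in># T'" for e
  proof -
    have "lhs e \<in> lhs ` set_mset ?M" using combine_steps_lhs[OF steps] that by blast
    then show ?thesis using tracks_eliminate_lhs[OF inv \<open>e0 \<in># T\<close>] by force
  qed
  then show ?thesis
    using combine_exh_distinct[OF combined] tracks_survivor[OF inv assms(2,3) steps]
    unfolding tracks_def by blast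
qed

definition alg_inv :: "nat set set \<Rightarrow> equation multiset \<Rightarrow> nat \<Rightarrow> bool" where
  "alg_inv A0 T j \<longleftrightarrow>
     (\<exists>red P W. tracks A0 red T \<and> reduction_in_span A0 red P W \<and> card P \<le> j)"

(* One iteration marks one more variable; the marked left-hand side is a reduced form, hence
   avoids all earlier marked variables. *)
lemma alg_inv_step:
  assumes "alg_inv A0 T j" "alg_step T T'"
  shows "alg_inv A0 T' (Suc j)"
proof -
  obtain red P W where inv: "tracks A0 red T" "reduction_in_span A0 red P W" "card P \<le> j"
    using assms(1) unfolding alg_inv_def by blast
  obtain l e0 where e0: "e0 \<in># T" "l \<in> lhs e0"
    and combined: "combine_exh (image_mset (eliminate l e0) (T - {#e0#})) T'"
    using assms(2) unfolding alg_step_iff by blast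
  obtain \<alpha>0 where "\<alpha>0 \<in> A0" "lhs e0 = red \<alpha>0" using inv(1) e0(1) unfolding tracks_def by blast
  then have "lhs e0 \<inter> P = {}" using inv(2) unfolding reduction_in_span_def by simp
  then have "reduction_in_span A0 (pivot l (lhs e0) red) (insert l P) (W \<union> symdiff (lhs e0) ` W)"
    using inv(2) e0(2) by (intro reduction_in_span_pivot)
  moreover have "tracks A0 (pivot l (lhs e0) red) T'"
    using inv(1) e0 combined by (rule tracks_step)
  moreover have "card (insert l P) \<le> Suc j"
    using inv(2,3) unfolding reduction_in_span_def marked_span_def by (simp add: card_insert_if)
  ultimately show ?thesis unfolding alg_inv_def by blast
qed

lemma alg_inv_iterate:
  assumes "is_instance S" "distinct_lhs S" "(alg_step ^^ j) S T"
  shows "alg_inv (lhs ` set_mset S) T j"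
  using assms(3)
proof (induction j arbitrary: T)
  case 0
  have "reduction_in_span (lhs ` set_mset S) id {} {{}}"
    unfolding reduction_in_span_def marked_span_def symdiff_closed_def
    by (simp add: symdiff_def)
  then show ?case using 0 tracks_init[OF assms(1,2)] unfolding alg_inv_def by fastforce
next
  case (Suc j)
  then obtain U where "(alg_step ^^ j) S U" "alg_step U T" by (meson relpowp_Suc_E)
  then show ?case using Suc.IH alg_inv_step by blast
qed

(* Survivors have pairwise distinct reduced forms, all occurring in T. *)
lemma survivors_card_le:
  assumes "tracks A0 red T" "finite A0"
  shows "card {\<alpha>\<in>A0. survives A0 red \<alpha>} \<le> size T"
proof -
  let ?G = "{\<alpha>\<in>A0. survives A0 red \<alpha>}"
  have "inj_on red ?G"
  proof (rule inj_onI)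
    fix \<alpha> \<beta> assume "\<alpha> \<in> ?G" "\<beta> \<in> ?G" "red \<alpha> = red \<beta>"
    then show "\<alpha> = \<beta>" unfolding survives_def by blast
  qed
  then have "card ?G = card (red ` ?G)" by (simp add: card_image)
  also have "\<dots> \<le> card (lhs ` set_mset T)"
    using assms(1) unfolding tracks_def by (intro card_mono) auto
  also have "\<dots> \<le> card (set_mset T)" by (rule card_image_le) simp
  also have "\<dots> \<le> size T" by (rule card_set_mset_le)
  finally show ?thesis .
qed

(* A lost equation avoiding P has a partner with the same reduced form, which must meet P;
   by separation this assignment is injective. *)
lemma lost_untouched_card_le:
  assumes inv: "reduction_in_span A0 red P W" and "finite A0" "{} \<notin> A0"
  shows "card {\<alpha>\<in>A0. \<not> survives A0 red \<alpha> \<and> \<alpha> \<inter> P = {}} \<le> card {\<alpha>\<in>A0. \<alpha> \<inter> P \<noteq> {}}"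
proof -
  let ?F = "{\<alpha>\<in>A0. \<not> survives A0 red \<alpha> \<and> \<alpha> \<inter> P = {}}"
  have partner: "\<exists>\<beta>\<in>A0. red \<beta> = red \<alpha> \<and> \<beta> \<inter> P \<noteq> {}" if lost: "\<alpha> \<in> ?F" for \<alpha>
  proof -
    have "\<alpha> \<in> A0" "\<alpha> \<inter> P = {}" "\<alpha> \<noteq> {}" using lost assms(3) by auto
    then have "red \<alpha> \<noteq> {}" using reduction_in_span_nonempty[OF inv] by blast
    then obtain \<beta> where "\<beta> \<in> A0" "red \<beta> = red \<alpha>" "\<beta> \<noteq> \<alpha>"
      using lost unfolding survives_def by blast
    moreover have "\<beta> \<inter> P \<noteq> {}"
      using reduction_in_span_separates[OF inv \<open>\<beta> \<in> A0\<close> \<open>\<alpha> \<in> A0\<close>] calculation \<open>\<alpha> \<inter> P = {}\<close>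
      by auto
    ultimately show ?thesis by blast
  qed
  define f where "f \<alpha> = (SOME \<beta>. \<beta> \<in> A0 \<and> red \<beta> = red \<alpha> \<and> \<beta> \<inter> P \<noteq> {})" for \<alpha>
  have f: "f \<alpha> \<in> A0 \<and> red (f \<alpha>) = red \<alpha> \<and> f \<alpha> \<inter> P \<noteq> {}" if "\<alpha> \<in> ?F" for \<alpha>
    unfolding f_def using someI_ex[OF partner[OF that, unfolded Bex_def]] .
  have "inj_on f ?F"
  proof (rule inj_onI)
    fix \<alpha> \<beta> assume "\<alpha> \<in> ?F" "\<beta> \<in> ?F" "f \<alpha> = f \<beta>"
    then have "red \<alpha> = red \<beta>" using f[of \<alpha>] f[of \<beta>] by simp
    moreover have "\<alpha> \<in> A0" "\<beta> \<in> A0" "\<alpha> \<inter> P = \<beta> \<inter> P" using \<open>\<alpha> \<in> ?F\<close> \<open>\<beta> \<in> ?F\<close> by auto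
    ultimately show "\<alpha> = \<beta>" using reduction_in_span_separates[OF inv] by blast
  qed
  moreover have "f ` ?F \<subseteq> {\<alpha>\<in>A0. \<alpha> \<inter> P \<noteq> {}}" using f by blast
  ultimately show ?thesis by (rule card_inj_on_le) (use \<open>finite A0\<close> in simp)
qed

(* Charging: each equation lost so far is paid for by an original equation meeting P. *)
lemma lost_card_le:
  assumes "tracks A0 red T" "reduction_in_span A0 red P W" "finite A0" "{} \<notin> A0"
  shows "card A0 \<le> size T + 2 * card {\<alpha>\<in>A0. \<alpha> \<inter> P \<noteq> {}}"
proof -
  let ?G = "{\<alpha>\<in>A0. survives A0 red \<alpha>}" and ?Q = "{\<alpha>\<in>A0. \<alpha> \<inter> P \<noteq> {}}"
    and ?F = "{\<alpha>\<in>A0. \<not> survives A0 red \<alpha> \<and> \<alpha> \<inter> P = {}}"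
  have "card A0 \<le> card (?G \<union> ?F \<union> ?Q)" using \<open>finite A0\<close> by (intro card_mono) auto
  also have "\<dots> \<le> card (?G \<union> ?F) + card ?Q" by (rule card_Un_le)
  finally have "card A0 \<le> card (?G \<union> ?F) + card ?Q" .
  moreover have "card (?G \<union> ?F) \<le> card ?G + card ?F" by (rule card_Un_le)
  ultimately show ?thesis
    using survivors_card_le[OF assms(1,3)] lost_untouched_card_le[OF assms(2,3,4)] by linarith
qed

(* Each marked variable occurs in at most rho S original equations. *)
lemma touched_card_le:
  assumes "finite P"
  shows "card {\<alpha>\<in>lhs ` set_mset S. \<alpha> \<inter> P \<noteq> {}} \<le> card P * rho S"
proof -
  define B where "B p = lhs ` set_mset (filter_mset (\<lambda>e. p \<in> lhs e) S)" for p
  have "card {\<alpha>\<in>lhs ` set_mset S. \<alpha> \<inter> P \<noteq> {}} \<le> card (\<Union>p\<in>P. B p)"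
    using assms unfolding B_def by (intro card_mono) auto
  also have "\<dots> \<le> (\<Sum>p\<in>P. card (B p))" by (rule card_UN_le[OF assms])
  also have "\<dots> \<le> (\<Sum>p\<in>P. rho S)"
  proof (rule sum_mono)
    fix p
    have "card (B p) \<le> card (set_mset (filter_mset (\<lambda>e. p \<in> lhs e) S))"
      unfolding B_def by (rule card_image_le) simp
    also have "\<dots> \<le> size (filter_mset (\<lambda>e. p \<in> lhs e) S)" by (rule card_set_mset_le)
    also have "\<dots> \<le> rho S" unfolding rho_def
    proof (rule Max_ge)
      show "finite (range (\<lambda>i. size (filter_mset (\<lambda>e. i \<in> lhs e) S)))"
        by (rule finite_subset[of _ "{..size S}"]) auto
    qed simp
    finally show "card (B p) \<le> rho S" .
  qed
  finally show ?thesis by simp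
qed

lemma deleted_equations_bound:
  assumes "is_instance S" "distinct_lhs S" "(alg_step ^^ j) S T"
  shows "size S - size T \<le> 2 * rho S * j"
proof -
  let ?A0 = "lhs ` set_mset S"
  obtain red P W where inv: "tracks ?A0 red T" "reduction_in_span ?A0 red P W" "card P \<le> j"
    using alg_inv_iterate[OF assms] unfolding alg_inv_def by blast
  have "size S = card ?A0"
    using assms(2) size_eq_card_set_mset[of "image_mset lhs S"] unfolding distinct_lhs_def by simp
  also have "\<dots> \<le> size T + 2 * card {\<alpha>\<in>?A0. \<alpha> \<inter> P \<noteq> {}}"
    using assms(1) by (intro lost_card_le[OF inv(1,2)]) (auto simp: is_instance_def)
  also have "card {\<alpha>\<in>?A0. \<alpha> \<inter> P \<noteq> {}} \<le> card P * rho S"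
    using inv(2) unfolding reduction_in_span_def marked_span_def by (intro touched_card_le) blast
  also have "card P * rho S \<le> j * rho S" using inv(3) by simp
  finally show ?thesis by (simp add: algebra_simps)
qed

lemma alg_step_possible:
  assumes "is_instance S" "distinct_lhs S" "(alg_step ^^ j) S T" "T \<noteq> {#}"
  shows "\<exists>T'. alg_step T T'"
proof -
  obtain e0 where "e0 \<in># T" using assms(4) by blast
  moreover obtain red where "tracks (lhs ` set_mset S) red T"
    using alg_inv_iterate[OF assms(1-3)] unfolding alg_inv_def by blast
  ultimately obtain l where "l \<in> lhs e0" unfolding tracks_def by blast
  moreover obtain T' where "combine_exh (image_mset (eliminate l e0) (T - {#e0#})) T'"
    using combine_exh_exists by blast
  ultimately show ?thesis using \<open>e0 \<in># T\<close> unfolding alg_step_iff by blast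
qed

theorem mainTheorem6:
  fixes S :: "equation multiset" and m k :: nat
  assumes "is_instance S"
    and "distinct_lhs S"
    and "size S = m"
  shows "(\<forall>T. (alg_step ^^ (k - 1)) S T \<longrightarrow> m - size T \<le> 2 * rho S * (k - 1))
       \<and> (2 * rho S * (k - 1) < m \<longrightarrow>
           (\<forall>j < k. \<forall>T. (alg_step ^^ j) S T \<longrightarrow> T \<noteq> {#} \<and> (\<exists>T'. alg_step T T')))"
proof -
  have bound: "m - size T \<le> 2 * rho S * j" if "(alg_step ^^ j) S T" for j T
    using deleted_equations_bound[OF assms(1,2) that] assms(3) by simp
  have "T \<noteq> {#} \<and> (\<exists>T'. alg_step T T')"
    if "2 * rho S * (k - 1) < m" "j < k" "(alg_step ^^ j) S T" for j T
  proof -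
    have "j \<le> k - 1" using \<open>j < k\<close> by simp
    then have "2 * rho S * j \<le> 2 * rho S * (k - 1)" by (rule mult_le_mono2)
    then have "0 < size T" using bound[OF that(3)] that(1) by linarith
    then have "T \<noteq> {#}" by auto
    then show ?thesis using alg_step_possible[OF assms(1,2) that(3)] by blast
  qed
  then show ?thesis using bound by blast
qed

end
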